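(* Let $G$ be a factor graph, $f_i$ an unknown factor of $G$, $C_{f_i}$ the set of known factors of $G$ that are possibly identical to $f_i$, and $C^{\ell}_{f_i}$ a maximal subset of $C_{f_i}$ such that $f_j\approx f_k$ for all $f_j,f_k\in C^{\ell}_{f_i}$. If $|C^{\ell}_{f_i}|/|C_{f_i}|>0.5$, then $C^{\ell}_{f_i}$ is unique, i.e. there is no other maximal subset $C^{\ell'}_{f_i}\ne C^{\ell}_{f_i}$ of $C_{f_i}$ with $|C^{\ell'}_{f_i}|=|C^{\ell}_{f_i}|$ whose elements are pairwise possibly identical.
   Context: A factor graph (FG) is an undirected bipartite graph with random variables (each with a finite range) and factors; each factor $f_j$ defines a function $\phi_j(\mathcal R_j)$ mapping assignments of a sequence $\mathcal R_j$ of random variables to positive reals (potentials), and a random variable is adjacent to $f_j$ iff it occurs in $\mathcal R_j$. A factor is \emph{unknown} if its potential values are unknown, otherwise known. Evidence is a set of observed events. $\mathrm{Ne}_G(v)$ is the neighbour set of node $v$. For factors $f_i,f_j$, their 2-step neighbourhoods are \emph{indistinguishable} if $|\mathrm{Ne}_G(f_i)|=|\mathrm{Ne}_G(f_j)|$ and there is a bijection $\tau:\mathrm{Ne}_G(f_i)\to\mathrm{Ne}_G(f_j)$ such that each $R_k$ and $\tau(R_k)$ have identical observed evidence, identical ranges, and the same number of neighbouring factors. Factors $f_i,f_j$ are \emph{possibly identical}, written $f_i\approx f_j$, if their 2-step neighbourhoods are indistinguishable and at least one of them is unknown or both encode identical potential mappings. Here "maximal subset" refers to a subset of largest cardinality among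 subsets of $C_{f_i}$ with pairwise possibly identical elements. *)

theory Defs
  imports Complex_Main
begin

text \<open>A factor is known iff its potential is Some phi, where phi maps assignments
(lists of values, one per argument variable, in order) to positive reals;
unknown factors have potential None.\<close>

record ('v, 'f, 'd) factor_graph =
  rvars   :: "'v set"
  factors :: "'f set"
  scope   :: "'f \<Rightarrow> 'v list"
  rng     :: "'v \<Rightarrow> 'd set"
  pot     :: "'f \<Rightarrow> ('d list \<Rightarrow> real) option"

definition assignments :: "('v, 'f, 'd) factor_graph \<Rightarrow> 'f \<Rightarrow> 'd list set" where
  "assignments G f = listset (map (rng G) (scope G f))"

definition wf_fg :: "('v, 'f, 'd) factor_graph \<Rightarrow> bool" where
  "wf_fg G \<longleftrightarrow>
     finite (rvars G) \<and> finite (factors G) \<and>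
     (\<forall>v\<in>rvars G. finite (rng G v) \<and> rng G v \<noteq> {}) \<and>
     (\<forall>f\<in>factors G. distinct (scope G f) \<and> set (scope G f) \<subseteq> rvars G) \<and>
     (\<forall>f\<in>factors G. \<forall>phi. pot G f = Some phi \<longrightarrow> (\<forall>xs\<in>assignments G f. phi xs > 0))"

definition known :: "('v, 'f, 'd) factor_graph \<Rightarrow> 'f \<Rightarrow> bool" where
  "known G f \<longleftrightarrow> pot G f \<noteq> None"

definition Ne_factor :: "('v, 'f, 'd) factor_graph \<Rightarrow> 'f \<Rightarrow> 'v set" where
  "Ne_factor G f = set (scope G f)"

definition Ne_var :: "('v, 'f, 'd) factor_graph \<Rightarrow> 'v \<Rightarrow> 'f set" where
  "Ne_var G v = {f \<in> factors G. v \<in> set (scope G f)}"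

text \<open>Evidence is a set of observed events (variable = value).\<close>
definition obs :: "('v \<times> 'd) set \<Rightarrow> 'v \<Rightarrow> 'd set" where
  "obs E v = {x. (v, x) \<in> E}"

definition indisting_2step ::
  "('v, 'f, 'd) factor_graph \<Rightarrow> ('v \<times> 'd) set \<Rightarrow> 'f \<Rightarrow> 'f \<Rightarrow> bool" where
  "indisting_2step G E fi fj \<longleftrightarrow>
     card (Ne_factor G fi) = card (Ne_factor G fj) \<and>
     (\<exists>\<tau>. bij_betw \<tau> (Ne_factor G fi) (Ne_factor G fj) \<and>
          (\<forall>R\<in>Ne_factor G fi. obs E R = obs E (\<tau> R) \<and> rng G R = rng G (\<tau> R) \<and>
                card (Ne_var G R) = card (Ne_var G (\<tau> R))))"

definition identical_potentials :: "('v, 'f, 'd) factor_graph \<Rightarrow> 'f \<Rightarrow> 'f \<Rightarrow> bool" where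
  "identical_potentials G fi fj \<longleftrightarrow>
     (\<exists>phi psi. pot G fi = Some phi \<and> pot G fj = Some psi \<and>
        assignments G fi = assignments G fj \<and>
        (\<forall>xs\<in>assignments G fi. phi xs = psi xs))"

definition poss_ident ::
  "('v, 'f, 'd) factor_graph \<Rightarrow> ('v \<times> 'd) set \<Rightarrow> 'f \<Rightarrow> 'f \<Rightarrow> bool" where
  "poss_ident G E fi fj \<longleftrightarrow>
     indisting_2step G E fi fj \<and>
     (\<not> known G fi \<or> \<not> known G fj \<or> identical_potentials G fi fj)"

definition cand :: "('v, 'f, 'd) factor_graph \<Rightarrow> ('v \<times> 'd) set \<Rightarrow> 'f \<Rightarrow> 'f set" where
  "cand G E fi = {fj \<in> factors G. known G fj \<and> poss_ident G E fi fj}"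

definition pairwise_pi ::
  "('v, 'f, 'd) factor_graph \<Rightarrow> ('v \<times> 'd) set \<Rightarrow> 'f set \<Rightarrow> bool" where
  "pairwise_pi G E S \<longleftrightarrow> (\<forall>fj\<in>S. \<forall>fk\<in>S. poss_ident G E fj fk)"

definition maximal_pi_subset ::
  "('v, 'f, 'd) factor_graph \<Rightarrow> ('v \<times> 'd) set \<Rightarrow> 'f \<Rightarrow> 'f set \<Rightarrow> bool" where
  "maximal_pi_subset G E fi S \<longleftrightarrow>
     S \<subseteq> cand G E fi \<and> pairwise_pi G E S \<and>
     (\<forall>T. T \<subseteq> cand G E fi \<and> pairwise_pi G E T \<longrightarrow> card T \<le> card S)"

end

theory Submission
  imports Defs
begin

text \<open>Possible identity is transitive through a known middle factor, so two pairwise possibly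
identical sets of known factors that share an element have a pairwise possibly identical union.
If both sets contain more than half of \<open>C\<^sub>f\<^sub>i\<close>, they must share an element, and maximality
of the first then forces the second to be contained in, hence equal to, the first.\<close>

lemma indisting_2step_trans:
  assumes "indisting_2step G E a b" and "indisting_2step G E b c"
  shows "indisting_2step G E a c"
proof -
  obtain \<sigma> where \<sigma>: "bij_betw \<sigma> (Ne_factor G a) (Ne_factor G b)"
    "\<forall>R\<in>Ne_factor G a. obs E R = obs E (\<sigma> R) \<and> rng G R = rng G (\<sigma> R) \<and>
                       card (Ne_var G R) = card (Ne_var G (\<sigma> R))"
    using assms(1) unfolding indisting_2step_def by blast
  obtain \<tau> where \<tau>: "bij_betw \<tau> (Ne_factor G b) (Ne_factor G c)"
    "\<forall>R\<in>Ne_factor G b. obs E R = obs E (\<tau> R) \<and> rng G R = rng G (\<tau> R) \<and>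
                       card (Ne_var G R) = card (Ne_var G (\<tau> R))"
    using assms(2) unfolding indisting_2step_def by blast
  have "bij_betw (\<tau> \<circ> \<sigma>) (Ne_factor G a) (Ne_factor G c)"
    using \<sigma>(1) \<tau>(1) by (rule bij_betw_trans)
  moreover have "\<forall>R\<in>Ne_factor G a. obs E R = obs E ((\<tau> \<circ> \<sigma>) R) \<and> rng G R = rng G ((\<tau> \<circ> \<sigma>) R) \<and>
                   card (Ne_var G R) = card (Ne_var G ((\<tau> \<circ> \<sigma>) R))"
    using \<sigma> \<tau>(2) by (auto dest: bij_betw_apply)
  moreover have "card (Ne_factor G a) = card (Ne_factor G c)"
    using assms unfolding indisting_2step_def by simp
  ultimately show ?thesis
    unfolding indisting_2step_def by blast
qed

lemma identical_potentials_trans: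
  assumes "identical_potentials G a b" and "identical_potentials G b c"
  shows "identical_potentials G a c"
  using assms unfolding identical_potentials_def by fastforce

lemma poss_ident_trans:
  assumes "poss_ident G E a b" and "poss_ident G E b c" and "known G b"
  shows "poss_ident G E a c"
proof -
  have indisting: "indisting_2step G E a b" "indisting_2step G E b c"
    and ab: "known G a \<Longrightarrow> identical_potentials G a b"
    and bc: "known G c \<Longrightarrow> identical_potentials G b c"
    using assms unfolding poss_ident_def by auto
  have "indisting_2step G E a c"
    using indisting by (rule indisting_2step_trans)
  moreover have "known G a \<Longrightarrow> known G c \<Longrightarrow> identical_potentials G a c"
    using ab bc by (rule identical_potentials_trans)
  ultimately show ?thesis
    unfolding poss_ident_def by blast
qed

lemma pairwise_pi_Un:
  assumes "pairwise_pi G E S" and "pairwise_pi G E T"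
    and "g \<in> S \<inter> T" and "known G g"
  shows "pairwise_pi G E (S \<union> T)"
  unfolding pairwise_pi_def
proof (intro ballI)
  fix a b assume "a \<in> S \<union> T" and "b \<in> S \<union> T"
  then have "poss_ident G E a g" and "poss_ident G E g b"
    using assms(1-3) unfolding pairwise_pi_def by auto
  then show "poss_ident G E a b"
    using assms(4) by (rule poss_ident_trans)
qed

lemma majority_subsets_intersect:
  assumes "finite C" and "S \<subseteq> C" and "T \<subseteq> C"
    and "card C < 2 * card S" and "card T = card S"
  shows "S \<inter> T \<noteq> {}"
proof
  assume "S \<inter> T = {}"
  have "finite S" "finite T"
    using assms(1-3) finite_subset by auto
  then have "card (S \<union> T) = card S + card T"
    using \<open>S \<inter> T = {}\<close> by (rule card_Un_disjoint)
  moreover have "card (S \<union> T) \<le> card C"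
    using assms(1-3) by (intro card_mono) auto
  ultimately show False
    using assms(4,5) by linarith
qed

lemma finite_cand:
  assumes "wf_fg G"
  shows "finite (cand G E fi)"
  using assms unfolding wf_fg_def cand_def by auto

lemma maximal_pi_subset_unique:
  assumes "finite (cand G E fi)" and "maximal_pi_subset G E fi S"
    and "T \<subseteq> cand G E fi" and "pairwise_pi G E T"
    and "card T = card S" and "S \<inter> T \<noteq> {}"
  shows "T = S"
proof -
  have S: "S \<subseteq> cand G E fi" "pairwise_pi G E S"
    using assms(2) unfolding maximal_pi_subset_def by auto
  obtain g where "g \<in> S \<inter> T"
    using assms(6) by blast
  moreover have "known G g"
    using \<open>g \<in> S \<inter> T\<close> S(1) unfolding cand_def by auto
  ultimately have "pairwise_pi G E (S \<union> T)"
    by (rule pairwise_pi_Un[OF S(2) assms(4)])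
  then have "card (S \<union> T) \<le> card S"
    using assms(2,3) S(1) unfolding maximal_pi_subset_def by auto
  moreover have "finite S" "finite T"
    using assms(1,3) S(1) finite_subset by auto
  ultimately have "S = S \<union> T"
    by (intro card_seteq) auto
  then show "T = S"
    using card_seteq[of S T] \<open>finite S\<close> assms(5) by auto
qed

theorem mainTheorem2:
  fixes G :: "('v, 'f, 'd) factor_graph" and E :: "('v \<times> 'd) set" and fi :: 'f
    and Cl :: "'f set"
  assumes "wf_fg G"
    and "fi \<in> factors G"
    and "\<not> known G fi"
    and "maximal_pi_subset G E fi Cl"
    and "real (card Cl) / real (card (cand G E fi)) > 0.5"
  shows "\<not> (\<exists>Cl'. Cl' \<subseteq> cand G E fi \<and> pairwise_pi G E Cl' \<and>
                 card Cl' = card Cl \<and> Cl' \<noteq> Cl)"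
proof
  assume "\<exists>Cl'. Cl' \<subseteq> cand G E fi \<and> pairwise_pi G E Cl' \<and> card Cl' = card Cl \<and> Cl' \<noteq> Cl"
  then obtain Cl' where Cl': "Cl' \<subseteq> cand G E fi" "pairwise_pi G E Cl'" "card Cl' = card Cl"
    and "Cl' \<noteq> Cl"
    by blast
  have fin: "finite (cand G E fi)"
    using assms(1) by (rule finite_cand)
  have "card (cand G E fi) < 2 * card Cl"
    using assms(5) by (cases "card (cand G E fi) = 0") (auto simp: field_simps)
  then have "Cl \<inter> Cl' \<noteq> {}"
    using fin assms(4) Cl'(1,3) unfolding maximal_pi_subset_def
    by (intro majority_subsets_intersect) auto
  then show False
    using maximal_pi_subset_unique[OF fin assms(4) Cl'] \<open>Cl' \<noteq> Cl\<close> by blast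
qed

end
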